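(* Let $k\ge1$, $k_1,\dots,k_N\in\{0,\dots,k\}$, $M_a=\#\{j\mid k_j=a\}$ ($1\le a\le k$), and let $V_{\mathbf M}$ be the fusion product $\Pi^{(k_1)}*\cdots*\Pi^{(k_N)}$ with cyclic vector $\mathbf v$ (the image of $v^{(k_1)}\otimes\cdots\otimes v^{(k_N)}$). For an indeterminate $\xi$ and every integer $\nu\ge0$, \[ \deg_z\bigl(X(z)+\xi Z(z)-\xi^2Y(z)\bigr)^\nu\mathbf v\le\sum_{i=1}^k\min(\nu,i)M_i-\nu . \]
   Context: $\mathfrak{o}_5=\{\sum c_{ab}e_{ab}\in\mathfrak{gl}_5\mid c_{ab}+c_{6-b,6-a}=0\}$, $X=e_{12}-e_{45}$, $Y=e_{14}-e_{25}$, $Z=\sqrt2(-e_{13}+e_{35})$; $\mathfrak a=\mathrm{span}(X,Y,Z)$ is abelian. $\Pi^{(k)}$ is the irreducible $\mathfrak{o}_5$-module whose highest weight is $k$ times that of $\mathbb{C}^5$, $v^{(k)}$ its lowest weight vector. Fusion product: for pairwise distinct $\zeta_1,\dots,\zeta_N$, $\mathfrak{o}_5[t]$ acts on $\bigotimes_a\Pi^{(k_a)}$ with $x\otimes t^i$ acting on the $a$-th factor by $\zeta_a^ix$; filter by $U^{\le d}(\mathfrak{o}_5[t])(\otimes_a v^{(k_a)})$ (monomials of total $t$-degree $\le d$); $V_{\mathbf M}$ is the associated graded $\mathfrak{o}_5[t]$-module. For $\eta\in\mathfrak a$, $\eta_i$ denotes the action of $\eta\otimes t^i$ on $V_{\mathbf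 M}$ and $\eta(z)=\sum_{i\ge0}\eta_iz^i$ (a polynomial in $z$ since $\eta_i=0$ for $i\ge N$). $\deg_z P\le d$ means the coefficients of $z^j$, $j>d$, in the vector-valued polynomial $P$ (with coefficients polynomial in $\xi$) vanish; if $d<0$ this means $P=0$. *)

theory Defs
  imports Complex_Main
begin

text \<open>The tensor product of the symmetric powers
  Sym^(k_a)(C^5), a < N, is realised as multihomogeneous polynomials in the
  variables y(a,b), a < N (tensor factor), b in {1..5} (coordinate of C^5).
  A polynomial is given by its coefficient function on monomials; a monomial
  is an exponent function.  The matrix unit e_pq acts on factor a by the
  derivation y(a,p) d/dy(a,q).  The irreducible module Pi^(k) is the
  o_5-submodule of Sym^k(C^5) generated by its lowest weight vector y_5^k, so
  the cyclic subspace generated by the product of the y(a,5)^(k_a) lies in the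
  tensor product of the Pi^(k_a), and the fusion filtration only depends on it.\<close>

type_synonym mon = "nat \<times> nat \<Rightarrow> nat"
type_synonym vec = "mon \<Rightarrow> complex"

text \<open>Matrices are functions nat => nat => complex; only entries with indices
  in {1..5} are used.\<close>
definition o5 :: "(nat \<Rightarrow> nat \<Rightarrow> complex) set" where
  "o5 = {c. \<forall>a\<in>{1..5}. \<forall>b\<in>{1..5}. c a b + c (6 - b) (6 - a) = 0}"

definition Eop :: "nat \<Rightarrow> nat \<Rightarrow> nat \<Rightarrow> vec \<Rightarrow> vec" where
  "Eop a p q f = (\<lambda>\<beta>.
     if p = q then of_nat (\<beta> (a, q)) * f \<beta>
     else if 1 \<le> \<beta> (a, p)
       then of_nat (\<beta> (a, q) + 1) * f (\<beta>((a, p) := \<beta> (a, p) - 1, (a, q) := \<beta> (a, q) + 1))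
       else 0)"

text \<open>Action of x \<otimes> t^i on the tensor product: factor a is scaled by zeta_a^i.\<close>
definition loop_act :: "(nat \<Rightarrow> complex) \<Rightarrow> nat \<Rightarrow> (nat \<Rightarrow> nat \<Rightarrow> complex) \<Rightarrow> nat \<Rightarrow> vec \<Rightarrow> vec" where
  "loop_act \<zeta> N c i f = (\<lambda>\<beta>. \<Sum>a<N. \<zeta> a ^ i * (\<Sum>p\<in>{1..5}. \<Sum>q\<in>{1..5}. c p q * Eop a p q f \<beta>))"

text \<open>Action of a monomial (x_1 \<otimes> t^i_1)...(x_m \<otimes> t^i_m) of U(o_5[t]).\<close>
definition act_word :: "(nat \<Rightarrow> complex) \<Rightarrow> nat \<Rightarrow> ((nat \<Rightarrow> nat \<Rightarrow> complex) \<times> nat) list \<Rightarrow> vec \<Rightarrow> vec" where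
  "act_word \<zeta> N w f = foldr (\<lambda>(c, i) g. loop_act \<zeta> N c i g) w f"

definition cyc_vec :: "nat \<Rightarrow> (nat \<Rightarrow> nat) \<Rightarrow> vec" where
  "cyc_vec N kk = (\<lambda>\<beta>. if \<beta> = (\<lambda>(a, b). if a < N \<and> b = 5 then kk a else 0) then 1 else 0)"

definition fus_gens :: "(nat \<Rightarrow> complex) \<Rightarrow> nat \<Rightarrow> (nat \<Rightarrow> nat) \<Rightarrow> nat \<Rightarrow> vec set" where
  "fus_gens \<zeta> N kk d = {act_word \<zeta> N w (cyc_vec N kk) | w.
      (\<forall>x\<in>set w. fst x \<in> o5) \<and> sum_list (map snd w) \<le> d}"

text \<open>The filtration piece U^{\<le>d}(o_5[t]) v (complex linear span).\<close>
definition fus_fil :: "(nat \<Rightarrow> complex) \<Rightarrow> nat \<Rightarrow> (nat \<Rightarrow> nat) \<Rightarrow> nat \<Rightarrow> vec set" where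
  "fus_fil \<zeta> N kk d = {(\<lambda>\<beta>. \<Sum>j<n. cf j * gg j \<beta>) | (n::nat) (cf::nat \<Rightarrow> complex) (gg::nat \<Rightarrow> vec).
      \<forall>j<n. gg j \<in> fus_gens \<zeta> N kk d}"

definition fus_fil_below :: "(nat \<Rightarrow> complex) \<Rightarrow> nat \<Rightarrow> (nat \<Rightarrow> nat) \<Rightarrow> nat \<Rightarrow> vec set" where
  "fus_fil_below \<zeta> N kk j = (if j = 0 then {(\<lambda>\<beta>. 0)} else fus_fil \<zeta> N kk (j - 1))"

definition matX :: "nat \<Rightarrow> nat \<Rightarrow> complex" where
  "matX p q = (if (p, q) = (1, 2) then 1 else if (p, q) = (4, 5) then -1 else 0)"
definition matY :: "nat \<Rightarrow> nat \<Rightarrow> complex" where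
  "matY p q = (if (p, q) = (1, 4) then 1 else if (p, q) = (2, 5) then -1 else 0)"
definition matZ :: "nat \<Rightarrow> nat \<Rightarrow> complex" where
  "matZ p q = (if (p, q) = (1, 3) then - complex_of_real (sqrt 2)
               else if (p, q) = (3, 5) then complex_of_real (sqrt 2) else 0)"

definition eta :: "complex \<Rightarrow> nat \<Rightarrow> nat \<Rightarrow> complex" where
  "eta \<xi> p q = matX p q + \<xi> * matZ p q - \<xi>^2 * matY p q"

text \<open>Representative in F_j of the coefficient of z^j in eta(z)^nu v:
  the sum over (i_1,...,i_nu) with i_1+...+i_nu = j of
  (eta \<otimes> t^i_1)...(eta \<otimes> t^i_nu) v.\<close>
definition zcoeff :: "(nat \<Rightarrow> complex) \<Rightarrow> nat \<Rightarrow> (nat \<Rightarrow> nat) \<Rightarrow> complex \<Rightarrow> nat \<Rightarrow> nat \<Rightarrow> vec" where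
  "zcoeff \<zeta> N kk \<xi> \<nu> j = (\<lambda>\<beta>. \<Sum>is\<in>{is. length is = \<nu> \<and> sum_list is = j}.
      act_word \<zeta> N (map (\<lambda>i. (eta \<xi>, i)) is) (cyc_vec N kk) \<beta>)"

end

theory Submission
  imports Defs "HOL-Computational_Algebra.Polynomial_FPS"
begin

text \<open>On a single factor, \<eta> = X + \<xi> Z - \<xi>^2 Y sends y_5 to
  w = \<xi>^2 y_2 + \<surd>2 \<xi> y_3 - y_4 and kills w, so \<eta>^r y_5^k is a multiple of
  w^r y_5^(k-r) and vanishes for r > k. Hence \<eta>^(a_1) ... \<eta>^(a_\<nu>) v, where \<eta>^(a) acts on
  the a-th factor only, vanishes as soon as some a occurs more than k_a times.
  As a power series \<eta>(z) = \<Sum>_a \<eta>^(a) / (1 - \<zeta>_a z), so \<eta>(z)^\<nu> v is the sum of these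
  vectors weighted by \<Prod>_t 1 / (1 - \<zeta>_(a_t) z). Multiplying by
  P(z) = \<Prod>_a (1 - \<zeta>_a z)^min(\<nu>, k_a) leaves a polynomial of degree at most
  \<Sum>_a min(\<nu>, k_a) - \<nu>. Since P(0) = 1, every coefficient of z^j beyond this degree is a
  linear combination of lower coefficients, hence lies in the lower piece of the filtration.\<close>

lemma prod_power_div_fact_Suc:
  fixes w :: "'b \<Rightarrow> 'a::field_char_0"
  assumes "finite P" "p \<in> P" "\<mu> p = Suc n"
  shows "of_nat (Suc n) * (\<Prod>c\<in>P. w c ^ \<mu> c / fact (\<mu> c))
       = w p * (\<Prod>c\<in>P. w c ^ (\<mu>(p := n)) c / fact ((\<mu>(p := n)) c))"
proof -
  have rest: "(\<Prod>c\<in>P - {p}. w c ^ (\<mu>(p := n)) c / fact ((\<mu>(p := n)) c))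
            = (\<Prod>c\<in>P - {p}. w c ^ \<mu> c / fact (\<mu> c))"
    by (rule prod.cong) auto
  show ?thesis
    using assms by (simp add: prod.remove rest field_simps del: of_nat_Suc)
qed

lemma prod_list_map_eq_prod_count:
  assumes "set xs \<subseteq> A" "finite A"
  shows "(\<Prod>x\<leftarrow>xs. f x) = (\<Prod>x\<in>A. f x ^ count_list xs x)"
  using assms(1)
proof (induction xs)
  case (Cons y xs)
  have "(\<Prod>x\<in>A. f x ^ count_list (y # xs) x) = (\<Prod>x\<in>A. (if x = y then f x else 1) * f x ^ count_list xs x)"
    by (rule prod.cong) auto
  also have "\<dots> = f y * (\<Prod>x\<in>A. f x ^ count_list xs x)"
    using Cons.prems assms(2) by (simp add: prod.distrib)
  finally show ?case
    using Cons by simp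
qed simp

lemma power_mult_inverse_power:
  fixes f g :: "'a :: comm_monoid_mult"
  assumes "f * g = 1" "c \<le> e"
  shows "f ^ e * g ^ c = f ^ (e - c)"
proof -
  have "f ^ e = f ^ (e - c) * f ^ c"
    using assms(2) by (simp flip: power_add)
  then show ?thesis
    using assms(1) by (simp add: mult.assoc flip: power_mult_distrib)
qed

lemma sum_card_fibres:
  fixes f :: "nat \<Rightarrow> 'a :: comm_semiring_1"
  assumes "finite A" "\<forall>a\<in>A. g a \<le> k" "f 0 = 0"
  shows "(\<Sum>i=1..k. f i * of_nat (card {a\<in>A. g a = i})) = (\<Sum>a\<in>A. f (g a))"
proof -
  have "(\<Sum>a\<in>A. f (g a)) = (\<Sum>i=0..k. \<Sum>a\<in>{a\<in>A. g a = i}. f (g a))"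
    using assms(1,2) by (intro sum.group[symmetric]) auto
  also have "\<dots> = (\<Sum>i=0..k. f i * of_nat (card {a\<in>A. g a = i}))"
    by (simp add: mult.commute)
  also have "\<dots> = (\<Sum>i=1..k. f i * of_nat (card {a\<in>A. g a = i}))"
    using assms(3) by (simp add: sum.atLeast_Suc_atMost)
  finally show ?thesis ..
qed

lemma degree_prod_linear_powers:
  fixes \<zeta> :: "'b \<Rightarrow> 'a :: idom"
  assumes "finite A"
  shows "degree (\<Prod>a\<in>A. [:1, - \<zeta> a:] ^ d a) \<le> (\<Sum>a\<in>A. d a)"
proof -
  have "degree (\<Prod>a\<in>A. [:1, - \<zeta> a:] ^ d a) \<le> (\<Sum>a\<in>A. degree ([:1, - \<zeta> a:] ^ d a))"
    using degree_prod_sum_le[OF assms] by (simp add: o_def)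
  also have "\<dots> \<le> (\<Sum>a\<in>A. d a)"
    by (intro sum_mono order.trans[OF degree_power_le]) simp
  finally show ?thesis .
qed

lemma fps_nth_inverse_one_minus_const_X:
  "fps_nth (inverse (1 - fps_const c * fps_X)) n = (c :: 'a :: field_char_0) ^ n"
  using one_minus_const_fps_X_neg_power'[of 1 c] by simp

section \<open>A single tensor factor\<close>

text \<open>Polynomials in y_1, ..., y_5, given by their coefficients on exponent vectors as for the
  tensor product in Defs; Eop_single p q is y_p \<partial>/\<partial>y_q.\<close>

type_synonym single_vec = "(nat \<Rightarrow> nat) \<Rightarrow> complex"

definition Eop_single :: "nat \<Rightarrow> nat \<Rightarrow> single_vec \<Rightarrow> single_vec" where
  "Eop_single p q g = (\<lambda>\<mu>.
     if p = q then of_nat (\<mu> q) * g \<mu>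
     else if 1 \<le> \<mu> p then of_nat (\<mu> q + 1) * g (\<mu>(p := \<mu> p - 1, q := \<mu> q + 1))
     else 0)"

definition act_single :: "(nat \<Rightarrow> nat \<Rightarrow> complex) \<Rightarrow> single_vec \<Rightarrow> single_vec" where
  "act_single c g = (\<lambda>\<mu>. \<Sum>p\<in>{1..5}. \<Sum>q\<in>{1..5}. c p q * Eop_single p q g \<mu>)"

text \<open>w_power \<xi> k r is w^r y_5^(k-r) / r! for w = \<eta> y_5 = \<Sum>_p \<eta>_p5 y_p, expanded by the
  multinomial theorem.\<close>

definition w_coeff :: "complex \<Rightarrow> (nat \<Rightarrow> nat) \<Rightarrow> complex" where
  "w_coeff \<xi> \<mu> = (\<Prod>p\<in>{2,3,4}. eta \<xi> p 5 ^ \<mu> p / fact (\<mu> p))"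

definition w_power :: "complex \<Rightarrow> nat \<Rightarrow> nat \<Rightarrow> single_vec" where
  "w_power \<xi> k r = (\<lambda>\<mu>. if \<mu> 1 = 0 \<and> \<mu> 5 + r = k \<and> \<mu> 2 + \<mu> 3 + \<mu> 4 = r then w_coeff \<xi> \<mu> else 0)"

lemma w_coeff_Suc:
  assumes "p \<in> {2,3,4}" "\<mu> p = Suc n"
  shows "of_nat (Suc n) * w_coeff \<xi> \<mu> = eta \<xi> p 5 * w_coeff \<xi> (\<mu>(p := n))"
  unfolding w_coeff_def by (rule prod_power_div_fact_Suc) (use assms in auto)

lemma w_coeff_cong: "\<forall>p\<in>{2,3,4}. \<mu> p = \<mu>' p \<Longrightarrow> w_coeff \<xi> \<mu> = w_coeff \<xi> \<mu>'"
  unfolding w_coeff_def by (rule prod.cong) auto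

lemma Eop_single_1_w_power:
  assumes p: "p \<in> {2,3,4}"
  shows "Eop_single 1 p (w_power \<xi> k r) \<mu> =
    (if \<mu> 1 = 1 \<and> \<mu> 5 + r = k \<and> Suc (\<mu> 2 + \<mu> 3 + \<mu> 4) = r then eta \<xi> p 5 * w_coeff \<xi> \<mu> else 0)"
proof -
  have "w_coeff \<xi> (\<mu>(1 := x, p := Suc (\<mu> p))) = w_coeff \<xi> (\<mu>(p := Suc (\<mu> p)))" for x
    by (rule w_coeff_cong) (use p in auto)
  moreover have "of_nat (Suc (\<mu> p)) * w_coeff \<xi> (\<mu>(p := Suc (\<mu> p))) = eta \<xi> p 5 * w_coeff \<xi> \<mu>"
    using w_coeff_Suc[of p "\<mu>(p := Suc (\<mu> p))" "\<mu> p" \<xi>] p by simp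
  ultimately show ?thesis
    using p unfolding Eop_single_def w_power_def by auto
qed

lemma Eop_single_5_w_power:
  assumes p: "p \<in> {2,3,4}" and "\<mu> 1 = 0"
  shows "eta \<xi> p 5 * Eop_single p 5 (w_power \<xi> k r) \<mu> =
    (if \<mu> 5 + Suc r = k \<and> \<mu> 2 + \<mu> 3 + \<mu> 4 = Suc r
     then of_nat (Suc (\<mu> 5) * \<mu> p) * w_coeff \<xi> \<mu> else 0)"
proof (cases "\<mu> p")
  case 0
  then show ?thesis using p by (auto simp: Eop_single_def)
next
  case (Suc n)
  have "w_coeff \<xi> (\<mu>(p := n, 5 := x)) = w_coeff \<xi> (\<mu>(p := n))" for x
    by (rule w_coeff_cong) (use p in auto)
  then have "Eop_single p 5 (w_power \<xi> k r) \<mu> =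
      (if \<mu> 5 + Suc r = k \<and> \<mu> 2 + \<mu> 3 + \<mu> 4 = Suc r
       then of_nat (Suc (\<mu> 5)) * w_coeff \<xi> (\<mu>(p := n)) else 0)"
    using p Suc assms(2) unfolding Eop_single_def w_power_def by auto
  moreover have "eta \<xi> p 5 * w_coeff \<xi> (\<mu>(p := n)) = of_nat (\<mu> p) * w_coeff \<xi> \<mu>"
    using w_coeff_Suc[of p \<mu> n \<xi>] p Suc by simp
  ultimately show ?thesis
    by (simp add: mult.left_commute[of "eta \<xi> p 5"] del: of_nat_Suc) (simp add: algebra_simps)
qed

text \<open>This is \<eta> w = 0.\<close>

lemma eta_mult_eta_1_5: "(\<Sum>p\<in>{2,3,4}. eta \<xi> 1 p * eta \<xi> p 5) = 0"
proof -
  have "complex_of_real (sqrt 2) * complex_of_real (sqrt 2) = 2"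
    by (simp flip: of_real_mult)
  then show ?thesis
    by (simp add: eta_def matX_def matY_def matZ_def algebra_simps power2_eq_square)
qed

lemma act_single_eta:
  "act_single (eta \<xi>) g \<mu> =
     (\<Sum>p\<in>{2,3,4}. eta \<xi> 1 p * Eop_single 1 p g \<mu> + eta \<xi> p 5 * Eop_single p 5 g \<mu>)"
proof -
  have "{1..5::nat} = {1,2,3,4,5}" by auto
  then show ?thesis
    by (simp add: act_single_def eta_def matX_def matY_def matZ_def)
qed

lemma act_single_eta_w_power:
  "act_single (eta \<xi>) (w_power \<xi> k r) \<mu> = of_nat ((k - r) * Suc r) * w_power \<xi> k (Suc r) \<mu>"
proof (cases "\<mu> 1 = 0")
  case True
  have "Eop_single 1 p g \<mu> = 0" if "p \<in> {2,3,4}" for p g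
    using True that by (auto simp: Eop_single_def)
  then have "act_single (eta \<xi>) (w_power \<xi> k r) \<mu> =
      (\<Sum>p\<in>{2,3,4}. if \<mu> 5 + Suc r = k \<and> \<mu> 2 + \<mu> 3 + \<mu> 4 = Suc r
                    then of_nat (Suc (\<mu> 5) * \<mu> p) * w_coeff \<xi> \<mu> else 0)"
    using Eop_single_5_w_power[where \<mu> = \<mu>] True by (simp add: act_single_eta)
  also have "\<dots> = of_nat ((k - r) * Suc r) * w_power \<xi> k (Suc r) \<mu>"
  proof (cases "\<mu> 5 + Suc r = k \<and> \<mu> 2 + \<mu> 3 + \<mu> 4 = Suc r")
    case True
    then have "(k - r) * Suc r = Suc (\<mu> 5) * (\<mu> 2 + \<mu> 3 + \<mu> 4)"
      by auto
    then show ?thesis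
      using True \<open>\<mu> 1 = 0\<close> by (simp add: w_power_def algebra_simps)
  qed (auto simp: w_power_def)
  finally show ?thesis .
next
  case False
  have Eop_5_vanish: "Eop_single p 5 (w_power \<xi> k r) \<mu> = 0" if "p \<in> {2,3,4}" for p
    using False that by (auto simp: Eop_single_def w_power_def)
  have "act_single (eta \<xi>) (w_power \<xi> k r) \<mu> =
      (\<Sum>p\<in>{2,3,4}. eta \<xi> 1 p * (if \<mu> 1 = 1 \<and> \<mu> 5 + r = k \<and> Suc (\<mu> 2 + \<mu> 3 + \<mu> 4) = r
                                     then eta \<xi> p 5 * w_coeff \<xi> \<mu> else 0))"
    unfolding act_single_eta
    by (rule sum.cong) (simp_all only: Eop_5_vanish Eop_single_1_w_power mult_zero_right add_0_right)
  also have "\<dots> = (if \<mu> 1 = 1 \<and> \<mu> 5 + r = k \<and> Suc (\<mu> 2 + \<mu> 3 + \<mu> 4) = r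
       then (\<Sum>p\<in>{2,3,4}. eta \<xi> 1 p * eta \<xi> p 5) * w_coeff \<xi> \<mu> else 0)"
    by (simp add: algebra_simps)
  also have "\<dots> = 0"
    by (simp only: eta_mult_eta_1_5 mult_zero_left if_cancel)
  also have "\<dots> = of_nat ((k - r) * Suc r) * w_power \<xi> k (Suc r) \<mu>"
    using False by (simp add: w_power_def)
  finally show ?thesis .
qed

section \<open>The tensor product\<close>

definition admissible :: "nat \<Rightarrow> mon \<Rightarrow> bool" where
  "admissible N \<beta> \<longleftrightarrow> (\<forall>a c. \<beta> (a, c) \<noteq> 0 \<longrightarrow> a < N \<and> c \<in> {1..5})"

definition tensor_vec :: "nat \<Rightarrow> (nat \<Rightarrow> single_vec) \<Rightarrow> vec" where
  "tensor_vec N \<phi> = (\<lambda>\<beta>. if admissible N \<beta> then \<Prod>a<N. \<phi> a (\<lambda>c. \<beta> (a, c)) else 0)"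

definition act_factor :: "(nat \<Rightarrow> nat \<Rightarrow> complex) \<Rightarrow> nat \<Rightarrow> vec \<Rightarrow> vec" where
  "act_factor c b f = (\<lambda>\<beta>. \<Sum>p\<in>{1..5}. \<Sum>q\<in>{1..5}. c p q * Eop b p q f \<beta>)"

lemma loop_act_eq_sum_act_factor:
  "loop_act \<zeta> N c i f = (\<lambda>\<beta>. \<Sum>a<N. \<zeta> a ^ i * act_factor c a f \<beta>)"
  by (simp add: loop_act_def act_factor_def)

lemma tensor_vec_update:
  assumes "b < N"
  shows "tensor_vec N (\<phi>(b := g)) \<beta> =
    (if admissible N \<beta> then g (\<lambda>c. \<beta> (b, c)) * (\<Prod>a\<in>{..<N} - {b}. \<phi> a (\<lambda>c. \<beta> (a, c))) else 0)"
proof -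
  have "(\<Prod>a\<in>{..<N} - {b}. (\<phi>(b := g)) a (\<lambda>c. \<beta> (a, c))) = (\<Prod>a\<in>{..<N} - {b}. \<phi> a (\<lambda>c. \<beta> (a, c)))"
    by (rule prod.cong) auto
  with assms show ?thesis
    by (simp add: tensor_vec_def prod.remove)
qed

lemma Eop_tensor_vec:
  assumes b: "b < N" and pq: "p \<in> {1..5}" "q \<in> {1..5}"
  shows "Eop b p q (tensor_vec N \<phi>) \<beta> = tensor_vec N (\<phi>(b := Eop_single p q (\<phi> b))) \<beta>"
proof -
  note tensor = tensor_vec_update[OF b, of \<phi> "\<phi> b", unfolded fun_upd_triv]
  show ?thesis
  proof (cases "p \<noteq> q \<and> 1 \<le> \<beta> (b, p)")
    case True
    define \<beta>' where "\<beta>' = \<beta>((b, p) := \<beta> (b, p) - 1, (b, q) := \<beta> (b, q) + 1)"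
    let ?\<mu>' = "(\<lambda>c. \<beta> (b, c))(p := \<beta> (b, p) - 1, q := \<beta> (b, q) + 1)"
    have adm: "admissible N \<beta>' \<longleftrightarrow> admissible N \<beta>"
      using True b pq unfolding admissible_def \<beta>'_def by (auto split: if_splits; metis)
    have slice_b: "(\<lambda>c. \<beta>' (b, c)) = ?\<mu>'"
      by (auto simp: \<beta>'_def)
    have slices: "(\<Prod>a\<in>{..<N} - {b}. \<phi> a (\<lambda>c. \<beta>' (a, c))) = (\<Prod>a\<in>{..<N} - {b}. \<phi> a (\<lambda>c. \<beta> (a, c)))"
      by (rule prod.cong) (auto simp: \<beta>'_def)
    have "Eop b p q (tensor_vec N \<phi>) \<beta> = of_nat (\<beta> (b, q) + 1) * tensor_vec N \<phi> \<beta>'"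
      using True by (simp add: Eop_def \<beta>'_def)
    also have "\<dots> = of_nat (\<beta> (b, q) + 1) *
        (if admissible N \<beta> then \<phi> b ?\<mu>' * (\<Prod>a\<in>{..<N} - {b}. \<phi> a (\<lambda>c. \<beta> (a, c))) else 0)"
      unfolding tensor adm slice_b slices ..
    also have "\<dots> = tensor_vec N (\<phi>(b := Eop_single p q (\<phi> b))) \<beta>"
      using True by (simp add: tensor_vec_update[OF b] Eop_single_def)
    finally show ?thesis .
  qed (auto simp: Eop_def Eop_single_def tensor_vec_update[OF b] tensor)
qed

lemma act_factor_tensor_vec:
  assumes "b < N"
  shows "act_factor c b (tensor_vec N \<phi>) = tensor_vec N (\<phi>(b := act_single c (\<phi> b)))"
proof
  fix \<beta>
  show "act_factor c b (tensor_vec N \<phi>) \<beta> = tensor_vec N (\<phi>(b := act_single c (\<phi> b))) \<beta>"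
    unfolding act_factor_def
    by (simp add: Eop_tensor_vec assms tensor_vec_update act_single_def sum_distrib_right mult.assoc)
qed

lemma act_factor_sum:
  "act_factor c b (\<lambda>\<beta>. \<Sum>s\<in>S. g s \<beta>) = (\<lambda>\<beta>. \<Sum>s\<in>S. act_factor c b (g s) \<beta>)"
proof
  fix \<beta>
  have Eop: "Eop b p q (\<lambda>\<beta>. \<Sum>s\<in>S. g s \<beta>) \<beta> = (\<Sum>s\<in>S. Eop b p q (g s) \<beta>)" for p q
    by (simp add: Eop_def sum_distrib_left)
  show "act_factor c b (\<lambda>\<beta>. \<Sum>s\<in>S. g s \<beta>) \<beta> = (\<Sum>s\<in>S. act_factor c b (g s) \<beta>)"
    unfolding act_factor_def Eop sum_distrib_left
    by (simp only: sum.swap[where B = S])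
qed

lemma act_factor_scale:
  "act_factor c b (\<lambda>\<beta>. d * f \<beta>) = (\<lambda>\<beta>. d * act_factor c b f \<beta>)"
proof -
  have "Eop b p q (\<lambda>\<beta>. d * f \<beta>) \<beta> = d * Eop b p q f \<beta>" for p q \<beta>
    by (simp add: Eop_def algebra_simps)
  then show ?thesis
    by (simp add: act_factor_def sum_distrib_left mult.left_commute)
qed

definition eta_state :: "complex \<Rightarrow> nat \<Rightarrow> (nat \<Rightarrow> nat) \<Rightarrow> (nat \<Rightarrow> nat) \<Rightarrow> vec" where
  "eta_state \<xi> N kk r = tensor_vec N (\<lambda>a. w_power \<xi> (kk a) (r a))"

lemma act_factor_eta_state:
  assumes b: "b < N"
  shows "act_factor (eta \<xi>) b (eta_state \<xi> N kk r) =
    (\<lambda>\<beta>. of_nat ((kk b - r b) * Suc (r b)) * eta_state \<xi> N kk (r(b := Suc (r b))) \<beta>)"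
proof
  fix \<beta>
  have upd: "(\<lambda>a. w_power \<xi> (kk a) ((r(b := Suc (r b))) a)) =
             (\<lambda>a. w_power \<xi> (kk a) (r a))(b := w_power \<xi> (kk b) (Suc (r b)))"
    by auto
  show "act_factor (eta \<xi>) b (eta_state \<xi> N kk r) \<beta> =
        of_nat ((kk b - r b) * Suc (r b)) * eta_state \<xi> N kk (r(b := Suc (r b))) \<beta>"
    unfolding eta_state_def act_factor_tensor_vec[OF b] upd
    by (simp add: tensor_vec_update[OF b] act_single_eta_w_power)
qed

lemma eta_state_0: "eta_state \<xi> N kk (\<lambda>_. 0) = cyc_vec N kk"
proof
  fix \<beta> :: mon
  let ?lowest = "\<lambda>(a, c). if a < N \<and> c = 5 then kk a else 0"
  have w0: "w_power \<xi> k 0 \<mu> = (if \<mu> 1 = 0 \<and> \<mu> 5 = k \<and> \<mu> 2 = 0 \<and> \<mu> 3 = 0 \<and> \<mu> 4 = 0 then 1 else 0)"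
    for k and \<mu> :: "nat \<Rightarrow> nat"
    by (simp add: w_power_def w_coeff_def)
  let ?lowest_in_each = "\<forall>a<N. \<beta> (a, 1) = 0 \<and> \<beta> (a, 5) = kk a \<and> \<beta> (a, 2) = 0 \<and> \<beta> (a, 3) = 0 \<and> \<beta> (a, 4) = 0"
  have "admissible N \<beta> \<and> ?lowest_in_each \<longleftrightarrow> \<beta> = ?lowest"
  proof
    assume conds: "admissible N \<beta> \<and> ?lowest_in_each"
    show "\<beta> = ?lowest"
    proof
      fix x :: "nat \<times> nat"
      obtain a c where x: "x = (a, c)"
        by fastforce
      show "\<beta> x = ?lowest x"
      proof (cases "a < N \<and> c \<in> {1..5}")
        case True
        then have "c \<in> {1,2,3,4,5}"
          by auto
        then show ?thesis
          using True conds x by auto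
      qed (use conds x in \<open>auto simp: admissible_def\<close>)
    qed
  qed (auto simp: admissible_def)
  then show "eta_state \<xi> N kk (\<lambda>_. 0) \<beta> = cyc_vec N kk \<beta>"
    by (auto simp: eta_state_def tensor_vec_def cyc_vec_def w0 prod.neutral)
qed

lemma eta_state_eq_0:
  assumes "a < N" "kk a < r a"
  shows "eta_state \<xi> N kk r = (\<lambda>\<beta>. 0)"
proof
  fix \<beta>
  have "w_power \<xi> (kk a) (r a) (\<lambda>c. \<beta> (a, c)) = 0"
    using assms(2) by (simp add: w_power_def)
  then show "eta_state \<xi> N kk r \<beta> = 0"
    using assms(1) by (auto simp: eta_state_def tensor_vec_def intro: prod_zero)
qed

definition eta_word_vec :: "complex \<Rightarrow> nat \<Rightarrow> (nat \<Rightarrow> nat) \<Rightarrow> nat list \<Rightarrow> vec" where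
  "eta_word_vec \<xi> N kk \<alpha> = foldr (act_factor (eta \<xi>)) \<alpha> (cyc_vec N kk)"

lemma eta_word_vec_multiple:
  "set \<alpha> \<subseteq> {..<N} \<Longrightarrow> \<exists>d. eta_word_vec \<xi> N kk \<alpha> = (\<lambda>\<beta>. d * eta_state \<xi> N kk (count_list \<alpha>) \<beta>)"
proof (induction \<alpha>)
  case Nil
  have "count_list [] = (\<lambda>_. 0)"
    by auto
  then show ?case
    by (intro exI[of _ 1]) (simp add: eta_word_vec_def eta_state_0)
next
  case (Cons b \<alpha>)
  then obtain d where d: "eta_word_vec \<xi> N kk \<alpha> = (\<lambda>\<beta>. d * eta_state \<xi> N kk (count_list \<alpha>) \<beta>)"
    by auto
  have b: "b < N"
    using Cons.prems by auto
  have "(count_list \<alpha>)(b := Suc (count_list \<alpha> b)) = count_list (b # \<alpha>)"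
    by auto
  then have "eta_word_vec \<xi> N kk (b # \<alpha>) =
      (\<lambda>\<beta>. (d * of_nat ((kk b - count_list \<alpha> b) * Suc (count_list \<alpha> b))) * eta_state \<xi> N kk (count_list (b # \<alpha>)) \<beta>)"
    by (simp add: eta_word_vec_def d[unfolded eta_word_vec_def] act_factor_scale act_factor_eta_state[OF b] mult.assoc)
  then show ?case
    by blast
qed

lemma eta_word_vec_eq_0:
  assumes "set \<alpha> \<subseteq> {..<N}" "kk a < count_list \<alpha> a"
  shows "eta_word_vec \<xi> N kk \<alpha> = (\<lambda>\<beta>. 0)"
proof -
  have "a < N"
    using assms by (metis count_notin lessThan_iff not_less_zero subsetD)
  moreover obtain d where "eta_word_vec \<xi> N kk \<alpha> = (\<lambda>\<beta>. d * eta_state \<xi> N kk (count_list \<alpha>) \<beta>)"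
    using eta_word_vec_multiple[OF assms(1)] by blast
  ultimately show ?thesis
    using eta_state_eq_0[of a N kk "count_list \<alpha>" \<xi>] assms(2) by simp
qed

section \<open>The generating function of \<eta>(z)^\<nu> v\<close>

definition words :: "nat \<Rightarrow> nat \<Rightarrow> nat list set" where
  "words N n = {xs. set xs \<subseteq> {..<N} \<and> length xs = n}"

definition compositions :: "nat \<Rightarrow> nat \<Rightarrow> nat list set" where
  "compositions n j = {is. length is = n \<and> sum_list is = j}"

lemma finite_compositions: "finite (compositions n j)"
proof (rule finite_subset)
  show "compositions n j \<subseteq> {xs. set xs \<subseteq> {..j} \<and> length xs = n}"
    unfolding compositions_def using member_le_sum_list by fastforce
qed (simp add: finite_lists_length_eq)

lemma sum_words_Suc: "(\<Sum>\<alpha>\<in>words N (Suc n). g \<alpha>) = (\<Sum>a<N. \<Sum>\<alpha>\<in>words N n. g (a # \<alpha>))"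
proof -
  have "words N (Suc n) = (\<lambda>(\<alpha>, a). a # \<alpha>) ` (words N n \<times> {..<N})"
    unfolding words_def by (rule lists_length_Suc_eq)
  moreover have "inj_on (\<lambda>(\<alpha>, a). a # \<alpha>) (words N n \<times> {..<N})"
    by (auto simp: inj_on_def)
  ultimately have "(\<Sum>\<alpha>\<in>words N (Suc n). g \<alpha>) = (\<Sum>(\<alpha>, a)\<in>words N n \<times> {..<N}. g (a # \<alpha>))"
    by (simp add: sum.reindex case_prod_unfold)
  also have "\<dots> = (\<Sum>\<alpha>\<in>words N n. \<Sum>a<N. g (a # \<alpha>))"
    by (rule sum.cartesian_product[symmetric])
  finally show ?thesis
    by (simp add: sum.swap[of _ "words N n"])
qed

lemma sum_compositions_Suc:
  "(\<Sum>is\<in>compositions (Suc n) j. g is) = (\<Sum>i=0..j. \<Sum>is\<in>compositions n (j - i). g (i # is))"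
proof -
  let ?S = "SIGMA i:{0..j}. compositions n (j - i)"
  have "compositions (Suc n) j = (\<lambda>(i, is). i # is) ` ?S"
    by (force simp: compositions_def length_Suc_conv)
  moreover have "inj_on (\<lambda>(i, is). i # is) ?S"
    by (auto simp: inj_on_def)
  ultimately show ?thesis
    by (simp add: sum.reindex sum.Sigma finite_compositions case_prod_unfold)
qed

definition word_series :: "(nat \<Rightarrow> complex) \<Rightarrow> nat list \<Rightarrow> complex fps" where
  "word_series \<zeta> \<alpha> = (\<Prod>a\<leftarrow>\<alpha>. inverse (1 - fps_const (\<zeta> a) * fps_X))"

lemma word_series_Cons_nth:
  "fps_nth (word_series \<zeta> (a # \<alpha>)) j = (\<Sum>i=0..j. \<zeta> a ^ i * fps_nth (word_series \<zeta> \<alpha>) (j - i))"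
  by (simp add: word_series_def fps_mult_nth fps_nth_inverse_one_minus_const_X)

lemma zcoeff_eq_sum_words:
  "zcoeff \<zeta> N kk \<xi> \<nu> j = (\<lambda>\<beta>. \<Sum>\<alpha>\<in>words N \<nu>. fps_nth (word_series \<zeta> \<alpha>) j * eta_word_vec \<xi> N kk \<alpha> \<beta>)"
proof (induction \<nu> arbitrary: j)
  case 0
  have "compositions 0 j = (if j = 0 then {[]} else {})" "words N 0 = {[]}"
    by (auto simp: compositions_def words_def)
  then show ?case
    unfolding zcoeff_def compositions_def[symmetric]
    by (auto simp: word_series_def eta_word_vec_def act_word_def)
next
  case (Suc \<nu>)
  let ?v = "cyc_vec N kk"
  show ?case
  proof
    fix \<beta>
    have "zcoeff \<zeta> N kk \<xi> (Suc \<nu>) j \<beta> = (\<Sum>i=0..j. \<Sum>is\<in>compositions \<nu> (j - i).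
        \<Sum>a<N. \<zeta> a ^ i * act_factor (eta \<xi>) a (act_word \<zeta> N (map (\<lambda>i. (eta \<xi>, i)) is) ?v) \<beta>)"
      unfolding zcoeff_def compositions_def[symmetric] sum_compositions_Suc
      by (simp add: act_word_def loop_act_eq_sum_act_factor)
    also have "\<dots> = (\<Sum>i=0..j. \<Sum>a<N. \<zeta> a ^ i * act_factor (eta \<xi>) a (zcoeff \<zeta> N kk \<xi> \<nu> (j - i)) \<beta>)"
      unfolding zcoeff_def compositions_def[symmetric] act_factor_sum
      by (simp add: sum_distrib_left sum.swap[where B = "{..<N}"])
    also have "\<dots> = (\<Sum>i=0..j. \<Sum>a<N. \<Sum>\<alpha>\<in>words N \<nu>.
        \<zeta> a ^ i * fps_nth (word_series \<zeta> \<alpha>) (j - i) * eta_word_vec \<xi> N kk (a # \<alpha>) \<beta>)"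
      by (simp add: Suc.IH act_factor_sum act_factor_scale eta_word_vec_def sum_distrib_left mult.assoc)
    also have "\<dots> = (\<Sum>a<N. \<Sum>\<alpha>\<in>words N \<nu>.
        (\<Sum>i=0..j. \<zeta> a ^ i * fps_nth (word_series \<zeta> \<alpha>) (j - i)) * eta_word_vec \<xi> N kk (a # \<alpha>) \<beta>)"
      by (simp add: sum_distrib_right sum.swap[where A = "{0..j}"])
    also have "\<dots> = (\<Sum>\<alpha>\<in>words N (Suc \<nu>). fps_nth (word_series \<zeta> \<alpha>) j * eta_word_vec \<xi> N kk \<alpha> \<beta>)"
      by (simp add: sum_words_Suc word_series_Cons_nth)
    finally show "zcoeff \<zeta> N kk \<xi> (Suc \<nu>) j \<beta> =
        (\<Sum>\<alpha>\<in>words N (Suc \<nu>). fps_nth (word_series \<zeta> \<alpha>) j * eta_word_vec \<xi> N kk \<alpha> \<beta>)" .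
  qed
qed

lemma fps_of_poly_prod_times_word_series:
  assumes "set \<alpha> \<subseteq> {..<N}" "\<forall>a<N. count_list \<alpha> a \<le> e a"
  shows "fps_of_poly (\<Prod>a<N. [:1, - \<zeta> a:] ^ e a) * word_series \<zeta> \<alpha> =
         fps_of_poly (\<Prod>a<N. [:1, - \<zeta> a:] ^ (e a - count_list \<alpha> a))"
proof -
  have linear_factor: "fps_of_poly [:1, - c:] = 1 - fps_const c * fps_X" for c :: complex
    by (simp add: fps_of_poly_linear')
  have inv: "(1 - fps_const c * fps_X) * inverse (1 - fps_const c * fps_X) = 1" for c :: complex
    by (rule inverse_mult_eq_1') simp
  have "word_series \<zeta> \<alpha> = (\<Prod>a<N. inverse (1 - fps_const (\<zeta> a) * fps_X) ^ count_list \<alpha> a)"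
    unfolding word_series_def using assms(1) by (rule prod_list_map_eq_prod_count) simp
  then show ?thesis
    using assms(2)
    by (simp add: fps_of_poly_prod fps_of_poly_power linear_factor power_mult_inverse_power[OF inv]
        flip: prod.distrib)
qed

lemma fps_nth_prod_times_word_series_eq_0:
  assumes "set \<alpha> \<subseteq> {..<N}" "length \<alpha> = \<nu>" "\<forall>a<N. count_list \<alpha> a \<le> kk a"
    and "(\<Sum>a<N. min \<nu> (kk a)) < j + \<nu>"
  shows "fps_nth (fps_of_poly (\<Prod>a<N. [:1, - \<zeta> a:] ^ min \<nu> (kk a)) * word_series \<zeta> \<alpha>) j = 0"
proof -
  have count_le: "\<forall>a<N. count_list \<alpha> a \<le> min \<nu> (kk a)"
    using assms(2,3) count_le_length by (metis min.bounded_iff)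
  have "(\<Sum>a<N. min \<nu> (kk a) - count_list \<alpha> a) = (\<Sum>a<N. min \<nu> (kk a)) - (\<Sum>a<N. count_list \<alpha> a)"
    using count_le by (intro sum_subtractf_nat) auto
  moreover have "(\<Sum>a<N. count_list \<alpha> a) \<le> (\<Sum>a<N. min \<nu> (kk a))"
    using count_le by (intro sum_mono) auto
  moreover have "(\<Sum>a<N. count_list \<alpha> a) = \<nu>"
    using sum_count_set[OF assms(1)] assms(2) by simp
  ultimately have "(\<Sum>a<N. min \<nu> (kk a) - count_list \<alpha> a) < j"
    using assms(4) by arith
  then have "degree (\<Prod>a<N. [:1, - \<zeta> a:] ^ (min \<nu> (kk a) - count_list \<alpha> a)) < j"
    using degree_prod_linear_powers[of "{..<N}" \<zeta>] le_less_trans by blast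
  then show ?thesis
    by (simp add: fps_of_poly_prod_times_word_series[OF assms(1) count_le] coeff_eq_0)
qed

lemma convolution_zcoeff_eq_0:
  assumes "(\<Sum>a<N. min \<nu> (kk a)) < j + \<nu>"
  shows "(\<Sum>l=0..j. coeff (\<Prod>a<N. [:1, - \<zeta> a:] ^ min \<nu> (kk a)) l * zcoeff \<zeta> N kk \<xi> \<nu> (j - l) \<beta>) = 0"
proof -
  let ?P = "\<Prod>a<N. [:1, - \<zeta> a:] ^ min \<nu> (kk a)"
  have "(\<Sum>l=0..j. coeff ?P l * zcoeff \<zeta> N kk \<xi> \<nu> (j - l) \<beta>) =
      (\<Sum>\<alpha>\<in>words N \<nu>. fps_nth (fps_of_poly ?P * word_series \<zeta> \<alpha>) j * eta_word_vec \<xi> N kk \<alpha> \<beta>)"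
    unfolding zcoeff_eq_sum_words fps_mult_nth fps_of_poly_nth sum_distrib_left sum_distrib_right
    by (subst sum.swap) (simp add: algebra_simps)
  also have "\<dots> = 0"
  proof (rule sum.neutral, rule ballI)
    fix \<alpha> assume "\<alpha> \<in> words N \<nu>"
    then have \<alpha>: "set \<alpha> \<subseteq> {..<N}" "length \<alpha> = \<nu>"
      by (auto simp: words_def)
    show "fps_nth (fps_of_poly ?P * word_series \<zeta> \<alpha>) j * eta_word_vec \<xi> N kk \<alpha> \<beta> = 0"
    proof (cases "\<forall>a<N. count_list \<alpha> a \<le> kk a")
      case True
      then show ?thesis
        using fps_nth_prod_times_word_series_eq_0[OF \<alpha> True assms] by simp
    next
      case False
      then obtain a where "kk a < count_list \<alpha> a"
        by (auto simp: not_le)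
      then show ?thesis
        using eta_word_vec_eq_0[OF \<alpha>(1)] by simp
    qed
  qed
  finally show ?thesis .
qed

lemma zcoeff_recursion:
  fixes \<zeta> :: "nat \<Rightarrow> complex" and kk :: "nat \<Rightarrow> nat" and N \<nu> j :: nat
  defines "P \<equiv> \<Prod>a<N. [:1, - \<zeta> a:] ^ min \<nu> (kk a)"
  assumes "(\<Sum>a<N. min \<nu> (kk a)) < j + \<nu>"
  shows "zcoeff \<zeta> N kk \<xi> \<nu> j = (\<lambda>\<beta>. \<Sum>l=1..j. - coeff P l * zcoeff \<zeta> N kk \<xi> \<nu> (j - l) \<beta>)"
proof
  fix \<beta>
  have "coeff P 0 = 1"
    by (simp add: P_def poly_0_coeff_0[symmetric] poly_prod)
  then have "(\<Sum>l=0..j. coeff P l * zcoeff \<zeta> N kk \<xi> \<nu> (j - l) \<beta>) =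
      zcoeff \<zeta> N kk \<xi> \<nu> j \<beta> + (\<Sum>l=1..j. coeff P l * zcoeff \<zeta> N kk \<xi> \<nu> (j - l) \<beta>)"
    by (simp add: sum.atLeast_Suc_atMost)
  then show "zcoeff \<zeta> N kk \<xi> \<nu> j \<beta> = (\<Sum>l=1..j. - coeff P l * zcoeff \<zeta> N kk \<xi> \<nu> (j - l) \<beta>)"
    using convolution_zcoeff_eq_0[OF assms(2), of \<zeta> \<xi> \<beta>]
    by (simp add: P_def sum_negf eq_neg_iff_add_eq_0)
qed

section \<open>The fusion filtration\<close>

lemma lincomb_in_fus_fil:
  assumes "finite S" "\<forall>s\<in>S. g s \<in> fus_gens \<zeta> N kk d"
  shows "(\<lambda>\<beta>. \<Sum>s\<in>S. c s * g s \<beta>) \<in> fus_fil \<zeta> N kk d"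
proof -
  obtain h where h: "bij_betw h {..<card S} S"
    using ex_bij_betw_nat_finite[OF assms(1)] by (auto simp: atLeast0LessThan)
  have "(\<Sum>i<card S. c (h i) * g (h i) \<beta>) = (\<Sum>s\<in>S. c s * g s \<beta>)" for \<beta>
    by (rule sum.reindex_bij_betw[OF h])
  then have "(\<lambda>\<beta>. \<Sum>s\<in>S. c s * g s \<beta>) = (\<lambda>\<beta>. \<Sum>i<card S. c (h i) * g (h i) \<beta>)"
    by simp
  moreover have "\<forall>i<card S. g (h i) \<in> fus_gens \<zeta> N kk d"
    using h assms(2) by (auto dest: bij_betwE)
  ultimately show ?thesis
    unfolding fus_fil_def
    by (intro CollectI exI[of _ "card S"] exI[of _ "\<lambda>i. c (h i)"] exI[of _ "\<lambda>i. g (h i)"]) simp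
qed

lemma eta_in_o5: "eta \<xi> \<in> o5"
proof -
  have "{1..5::nat} = {1,2,3,4,5}" by auto
  then show ?thesis
    by (simp add: o5_def eta_def matX_def matY_def matZ_def)
qed

lemma zcoeff_in_fus_fil_below:
  assumes "zcoeff \<zeta> N kk \<xi> \<nu> j = (\<lambda>\<beta>. \<Sum>l=1..j. c l * zcoeff \<zeta> N kk \<xi> \<nu> (j - l) \<beta>)"
  shows "zcoeff \<zeta> N kk \<xi> \<nu> j \<in> fus_fil_below \<zeta> N kk j"
proof (cases "j = 0")
  case True
  with assms show ?thesis
    by (simp add: fus_fil_below_def)
next
  case False
  let ?S = "SIGMA l:{1..j}. compositions \<nu> (j - l)"
  let ?g = "\<lambda>(l, is). act_word \<zeta> N (map (\<lambda>i. (eta \<xi>, i)) is) (cyc_vec N kk)"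
  have "(\<lambda>\<beta>. \<Sum>l=1..j. c l * zcoeff \<zeta> N kk \<xi> \<nu> (j - l) \<beta>) = (\<lambda>\<beta>. \<Sum>s\<in>?S. c (fst s) * ?g s \<beta>)"
    unfolding zcoeff_def compositions_def[symmetric]
    by (simp add: sum_distrib_left sum.Sigma finite_compositions case_prod_unfold)
  then have "zcoeff \<zeta> N kk \<xi> \<nu> j = (\<lambda>\<beta>. \<Sum>s\<in>?S. c (fst s) * ?g s \<beta>)"
    using assms by simp
  also have "\<dots> \<in> fus_fil \<zeta> N kk (j - 1)"
  proof (rule lincomb_in_fus_fil)
    show "finite ?S"
      by (simp add: finite_compositions)
    show "\<forall>s\<in>?S. ?g s \<in> fus_gens \<zeta> N kk (j - 1)"
      unfolding fus_gens_def compositions_def using eta_in_o5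
      by (force intro!: exI[where x = "map (\<lambda>i. (eta \<xi>, i)) is" for "is"] simp: o_def)
  qed
  finally show ?thesis
    using False by (simp add: fus_fil_below_def)
qed

theorem proposition3p7:
  fixes k N :: nat and kk :: "nat \<Rightarrow> nat" and \<zeta> :: "nat \<Rightarrow> complex" and \<nu> :: nat
  assumes "k \<ge> 1"
    and "\<forall>a<N. kk a \<le> k"
    and "inj_on \<zeta> {..<N}"
  shows "\<forall>\<xi>::complex. \<forall>j::nat.
           int j > (\<Sum>i=1..k. int (min \<nu> i) * int (card {a\<in>{..<N}. kk a = i})) - int \<nu>
           \<longrightarrow> zcoeff \<zeta> N kk \<xi> \<nu> j \<in> fus_fil_below \<zeta> N kk j"
proof (intro allI impI)
  fix \<xi> :: complex and j :: nat
  assume j: "int j > (\<Sum>i=1..k. int (min \<nu> i) * int (card {a\<in>{..<N}. kk a = i})) - int \<nu>"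
  have "(\<Sum>i=1..k. int (min \<nu> i) * int (card {a\<in>{..<N}. kk a = i})) = int (\<Sum>a<N. min \<nu> (kk a))"
    using sum_card_fibres[of "{..<N}" kk k "\<lambda>i. int (min \<nu> i)"] assms(2) by simp
  with j have "(\<Sum>a<N. min \<nu> (kk a)) < j + \<nu>"
    by linarith
  then show "zcoeff \<zeta> N kk \<xi> \<nu> j \<in> fus_fil_below \<zeta> N kk j"
    by (rule zcoeff_in_fus_fil_below[OF zcoeff_recursion])
qed

end
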